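(* Let $\theta\in\mathbb{R}^{m\times n}$ and $\overline\theta = \frac{1}{mn}\sum_{i=1}^m\sum_{j=1}^n\theta[i,j]$. Then $$\sum_{i=1}^m\sum_{j=1}^n(\theta[i,j]-\overline\theta)^2 \leq \Big(5 + \frac{4mn}{\min(n^2,m^2)}\Big)\mathrm{TV}(\theta)^2.$$ In particular, when $m=n$, $\sum_{i=1}^n\sum_{j=1}^n(\theta[i,j]-\overline\theta)^2 \le 9\,\mathrm{TV}(\theta)^2$.
   Context: For $\theta\in\mathbb{R}^{m\times n}$, $\mathrm{TV}(\theta) = \sum_{i\in[m]}\sum_{j\in[n-1]}|\theta[i,j+1]-\theta[i,j]| + \sum_{i\in[m-1]}\sum_{j\in[n]}|\theta[i+1,j]-\theta[i,j]|$ (unnormalized total variation over the edges of the $m\times n$ grid graph). *)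

theory Defs
  imports Complex_Main
begin

text \<open>Grid matrices are represented as functions nat => nat => real, with
  row indices in {..<m} and column indices in {..<n} (0-based).\<close>

definition TV :: "nat \<Rightarrow> nat \<Rightarrow> (nat \<Rightarrow> nat \<Rightarrow> real) \<Rightarrow> real" where
  "TV m n \<theta> =
     (\<Sum>i<m. \<Sum>j<n - 1. \<bar>\<theta> i (j + 1) - \<theta> i j\<bar>)
   + (\<Sum>i<m - 1. \<Sum>j<n. \<bar>\<theta> (i + 1) j - \<theta> i j\<bar>)"

definition grid_mean :: "nat \<Rightarrow> nat \<Rightarrow> (nat \<Rightarrow> nat \<Rightarrow> real) \<Rightarrow> real" where
  "grid_mean m n \<theta> = (\<Sum>i<m. \<Sum>j<n. \<theta> i j) / (real m * real n)"

end

(* Let H_i and V_j be the variations of row i and column j. The entries (i,j) and (k,l) are joined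
   by a monotone path through (i,l) and another through (k,j), so
   (\<theta> i j - \<theta> k l)^2 \<le> (H_i + V_l) (V_j + H_k). Summing over all four indices, the right side
   factorises into (n \<Sum>H + m \<Sum>V)^2 \<le> (max m n)^2 TV^2, while the left side is 2mn times the sum
   of squared deviations from the mean. This gives the bound max(m,n) / (2 min(m,n)) TV^2,
   which is below the stated constant. *)

theory Submission
  imports Defs
begin

lemma abs_diff_le_sum_abs_increments:
  fixes f :: "nat \<Rightarrow> 'a::ordered_ab_group_add_abs"
  assumes "j \<le> l"
  shows "\<bar>f l - f j\<bar> \<le> (\<Sum>t = j..<l. \<bar>f (Suc t) - f t\<bar>)"
  using sum_abs[of "\<lambda>t. f (Suc t) - f t" "{j..<l}"] by (simp add: sum_Suc_diff' assms)

lemma abs_diff_le_total_variation: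
  fixes f :: "nat \<Rightarrow> 'a::ordered_ab_group_add_abs"
  assumes "j < n" "l < n"
  shows "\<bar>f j - f l\<bar> \<le> (\<Sum>t<n - 1. \<bar>f (t + 1) - f t\<bar>)"
proof -
  have ordered: "\<bar>f b - f a\<bar> \<le> (\<Sum>t<n - 1. \<bar>f (t + 1) - f t\<bar>)"
    if "a \<le> b" "b < n" for a b
  proof -
    have "\<bar>f b - f a\<bar> \<le> (\<Sum>t = a..<b. \<bar>f (Suc t) - f t\<bar>)"
      using abs_diff_le_sum_abs_increments that(1) .
    also have "\<dots> \<le> (\<Sum>t<n - 1. \<bar>f (Suc t) - f t\<bar>)"
      by (rule sum_mono2) (use that in auto)
    finally show ?thesis by simp
  qed
  show ?thesis
  proof (cases "j \<le> l")
    case True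
    then show ?thesis using ordered[of j l] assms by (simp add: abs_minus_commute)
  next
    case False
    then show ?thesis using ordered[of l j] assms by simp
  qed
qed

lemma sum_sq_dev_mean_eq_pairwise:
  fixes g :: "'a \<Rightarrow> real"
  assumes "finite A" "A \<noteq> {}"
  shows "2 * real (card A) * (\<Sum>p\<in>A. (g p - sum g A / real (card A))^2)
         = (\<Sum>p\<in>A. \<Sum>q\<in>A. (g p - g q)^2)"
proof -
  define N where "N = real (card A)"
  define S where "S = sum g A"
  define Q where "Q = (\<Sum>p\<in>A. (g p)^2)"
  have "N > 0" using assms by (simp add: N_def card_gt_0_iff)
  have "(\<Sum>p\<in>A. (g p - S / N)^2) = (\<Sum>p\<in>A. (g p)^2 - 2 * (S / N) * g p + (S / N)^2)"
    by (simp add: power2_diff algebra_simps)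
  also have "\<dots> = Q - 2 * (S / N) * S + N * (S / N)^2"
    by (simp add: sum.distrib sum_subtractf sum_distrib_left[symmetric]
        sum_divide_distrib[symmetric] Q_def S_def N_def)
  finally have lhs: "(\<Sum>p\<in>A. (g p - S / N)^2) = Q - 2 * (S / N) * S + N * (S / N)^2" .
  have "(\<Sum>p\<in>A. \<Sum>q\<in>A. (g p - g q)^2) = (\<Sum>p\<in>A. \<Sum>q\<in>A. (g p)^2 - 2 * g p * g q + (g q)^2)"
    by (simp add: power2_diff algebra_simps)
  also have "\<dots> = (\<Sum>p\<in>A. N * (g p)^2 - 2 * g p * S + Q)"
    by (simp add: sum.distrib sum_subtractf sum_distrib_left[symmetric] Q_def S_def N_def mult.assoc)
  also have "\<dots> = 2 * N * Q - 2 * S * S"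
    by (simp add: sum.distrib sum_subtractf sum_distrib_left[symmetric]
        sum_distrib_right[symmetric] Q_def S_def N_def)
  finally have rhs: "(\<Sum>p\<in>A. \<Sum>q\<in>A. (g p - g q)^2) = 2 * N * Q - 2 * S * S" .
  show ?thesis
    unfolding N_def[symmetric] S_def[symmetric] lhs rhs
    using \<open>N > 0\<close> by (simp add: field_simps power2_eq_square)
qed

lemma grid_sum_sq_dev_mean_eq_pairwise:
  fixes \<theta> :: "nat \<Rightarrow> nat \<Rightarrow> real"
  assumes "m \<ge> 1" "n \<ge> 1"
  shows "2 * (real m * real n) * (\<Sum>i<m. \<Sum>j<n. (\<theta> i j - grid_mean m n \<theta>)^2)
         = (\<Sum>i<m. \<Sum>j<n. \<Sum>k<m. \<Sum>l<n. (\<theta> i j - \<theta> k l)^2)"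
proof -
  define A where "A = {..<m} \<times> {..<n}"
  have grid_sum: "(\<Sum>i<m. \<Sum>j<n. F i j) = (\<Sum>p\<in>A. F (fst p) (snd p))"
    for F :: "nat \<Rightarrow> nat \<Rightarrow> real"
    unfolding A_def by (simp add: sum.cartesian_product case_prod_beta)
  have card_A: "real (card A) = real m * real n"
    unfolding A_def by (simp add: card_cartesian_product)
  have "finite A" "A \<noteq> {}"
    unfolding A_def using assms by (auto simp: lessThan_empty_iff)
  from sum_sq_dev_mean_eq_pairwise[OF this, of "\<lambda>p. \<theta> (fst p) (snd p)"]
  show ?thesis
    unfolding grid_sum grid_mean_def card_A by simp
qed

definition row_variation :: "nat \<Rightarrow> (nat \<Rightarrow> nat \<Rightarrow> real) \<Rightarrow> nat \<Rightarrow> real" where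
  "row_variation n \<theta> i = (\<Sum>j<n - 1. \<bar>\<theta> i (j + 1) - \<theta> i j\<bar>)"

definition column_variation :: "nat \<Rightarrow> (nat \<Rightarrow> nat \<Rightarrow> real) \<Rightarrow> nat \<Rightarrow> real" where
  "column_variation m \<theta> j = (\<Sum>i<m - 1. \<bar>\<theta> (i + 1) j - \<theta> i j\<bar>)"

lemma row_variation_nonneg: "row_variation n \<theta> i \<ge> 0"
  unfolding row_variation_def by simp

lemma column_variation_nonneg: "column_variation m \<theta> j \<ge> 0"
  unfolding column_variation_def by simp

lemma TV_eq_sum_row_column_variation:
  "TV m n \<theta> = (\<Sum>i<m. row_variation n \<theta> i) + (\<Sum>j<n. column_variation m \<theta> j)"
  unfolding TV_def row_variation_def column_variation_def
  using sum.swap[where A = "{..<m - 1}" and B = "{..<n}" and g = "\<lambda>i j. \<bar>\<theta> (i + 1) j - \<theta> i j\<bar>"]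
  by simp

lemma abs_diff_le_row_variation:
  "j < n \<Longrightarrow> l < n \<Longrightarrow> \<bar>\<theta> i j - \<theta> i l\<bar> \<le> row_variation n \<theta> i"
  unfolding row_variation_def by (rule abs_diff_le_total_variation)

lemma abs_diff_le_column_variation:
  "i < m \<Longrightarrow> k < m \<Longrightarrow> \<bar>\<theta> i j - \<theta> k j\<bar> \<le> column_variation m \<theta> j"
  unfolding column_variation_def by (rule abs_diff_le_total_variation[where f = "\<lambda>i. \<theta> i j"])

lemma sq_diff_le_path_variations:
  assumes "i < m" "k < m" "j < n" "l < n"
  shows "(\<theta> i j - \<theta> k l)^2
    \<le> (row_variation n \<theta> i + column_variation m \<theta> l)
      * (column_variation m \<theta> j + row_variation n \<theta> k)"
proof -
  have "\<bar>\<theta> i j - \<theta> k l\<bar> \<le> row_variation n \<theta> i + column_variation m \<theta> l"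
    using abs_diff_le_row_variation[of j n l \<theta> i] abs_diff_le_column_variation[of i m k \<theta> l] assms
    by linarith
  moreover have "\<bar>\<theta> i j - \<theta> k l\<bar> \<le> column_variation m \<theta> j + row_variation n \<theta> k"
    using abs_diff_le_row_variation[of j n l \<theta> k] abs_diff_le_column_variation[of i m k \<theta> j] assms
    by linarith
  ultimately have "\<bar>\<theta> i j - \<theta> k l\<bar> * \<bar>\<theta> i j - \<theta> k l\<bar>
    \<le> (row_variation n \<theta> i + column_variation m \<theta> l)
      * (column_variation m \<theta> j + row_variation n \<theta> k)"
    by (intro mult_mono) (auto intro: add_nonneg_nonneg row_variation_nonneg column_variation_nonneg)
  then show ?thesis by (simp add: power2_eq_square)
qed

lemma sum_cross_products_eq_square:
  fixes a b :: "nat \<Rightarrow> real"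
  shows "(\<Sum>i<m. \<Sum>j<n. \<Sum>k<m. \<Sum>l<n. (a i + b l) * (b j + a k))
         = (real n * sum a {..<m} + real m * sum b {..<n})^2"
proof -
  have "(\<Sum>k<m. \<Sum>l<n. (a i + b l) * (b j + a k))
      = (\<Sum>l<n. a i + b l) * (\<Sum>k<m. b j + a k)" for i j
    by (subst sum_product) (rule sum.swap)
  then have "(\<Sum>i<m. \<Sum>j<n. \<Sum>k<m. \<Sum>l<n. (a i + b l) * (b j + a k))
      = (\<Sum>i<m. \<Sum>l<n. a i + b l) * (\<Sum>j<n. \<Sum>k<m. b j + a k)"
    by (simp add: sum_product)
  also have "\<dots> = (real n * sum a {..<m} + real m * sum b {..<n})^2"
    by (simp add: sum.distrib sum_distrib_left power2_eq_square algebra_simps)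
  finally show ?thesis .
qed

lemma grid_sum_sq_dev_mean_le:
  fixes \<theta> :: "nat \<Rightarrow> nat \<Rightarrow> real"
  assumes "m \<ge> 1" "n \<ge> 1"
  shows "2 * (real m * real n) * (\<Sum>i<m. \<Sum>j<n. (\<theta> i j - grid_mean m n \<theta>)^2)
         \<le> (max (real m) (real n) * TV m n \<theta>)^2"
proof -
  define R where "R = (\<Sum>i<m. row_variation n \<theta> i)"
  define C where "C = (\<Sum>j<n. column_variation m \<theta> j)"
  have "R \<ge> 0" "C \<ge> 0"
    unfolding R_def C_def by (auto intro: sum_nonneg row_variation_nonneg column_variation_nonneg)
  have "2 * (real m * real n) * (\<Sum>i<m. \<Sum>j<n. (\<theta> i j - grid_mean m n \<theta>)^2)
      = (\<Sum>i<m. \<Sum>j<n. \<Sum>k<m. \<Sum>l<n. (\<theta> i j - \<theta> k l)^2)"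
    by (rule grid_sum_sq_dev_mean_eq_pairwise[OF assms])
  also have "\<dots> \<le> (\<Sum>i<m. \<Sum>j<n. \<Sum>k<m. \<Sum>l<n.
      (row_variation n \<theta> i + column_variation m \<theta> l)
      * (column_variation m \<theta> j + row_variation n \<theta> k))"
    by (intro sum_mono sq_diff_le_path_variations) auto
  also have "\<dots> = (real n * R + real m * C)^2"
    unfolding R_def C_def by (rule sum_cross_products_eq_square)
  also have "\<dots> \<le> (max (real m) (real n) * (R + C))^2"
  proof (rule power_mono)
    have "real n * R + real m * C \<le> max (real m) (real n) * R + max (real m) (real n) * C"
      using \<open>R \<ge> 0\<close> \<open>C \<ge> 0\<close> by (intro add_mono mult_right_mono) auto
    then show "real n * R + real m * C \<le> max (real m) (real n) * (R + C)"
      by (simp add: distrib_left)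
  qed (use \<open>R \<ge> 0\<close> \<open>C \<ge> 0\<close> in simp)
  finally show ?thesis
    by (simp add: TV_eq_sum_row_column_variation R_def C_def)
qed

lemma max_sq_div_le_grid_constant:
  fixes a b :: real
  assumes "a > 0" "b > 0"
  shows "(max a b)^2 / (2 * (a * b)) \<le> 5 + 4 * a * b / min (b^2) (a^2)"
proof -
  have "(max a b)^2 / (2 * (a * b)) \<le> 4 * a * b / min (b^2) (a^2)"
  proof (cases "a \<le> b")
    case True
    then have "min (b^2) (a^2) = a^2" using assms by (intro min_absorb2 power_mono) auto
    then show ?thesis using True assms by (simp add: field_simps power2_eq_square max_def)
  next
    case False
    then have "min (b^2) (a^2) = b^2" using assms by (intro min_absorb1 power_mono) auto
    then show ?thesis using False assms by (simp add: field_simps power2_eq_square max_def)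
  qed
  then show ?thesis by linarith
qed

lemma grid_sum_sq_dev_mean_le_TV:
  fixes \<theta> :: "nat \<Rightarrow> nat \<Rightarrow> real"
  assumes "m \<ge> 1" "n \<ge> 1"
  shows "(\<Sum>i<m. \<Sum>j<n. (\<theta> i j - grid_mean m n \<theta>)^2)
         \<le> (5 + 4 * real m * real n / min ((real n)^2) ((real m)^2)) * (TV m n \<theta>)^2"
proof -
  have "real m * real n > 0" using assms by simp
  then have "(\<Sum>i<m. \<Sum>j<n. (\<theta> i j - grid_mean m n \<theta>)^2)
      \<le> (max (real m) (real n))^2 / (2 * (real m * real n)) * (TV m n \<theta>)^2"
    using grid_sum_sq_dev_mean_le[OF assms, of \<theta>]
    by (simp add: field_simps power_mult_distrib)
  also have "\<dots> \<le> (5 + 4 * real m * real n / min ((real n)^2) ((real m)^2)) * (TV m n \<theta>)^2"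
    using max_sq_div_le_grid_constant[of "real m" "real n"] assms
    by (intro mult_right_mono) auto
  finally show ?thesis .
qed

theorem proposition4p3:
  fixes m n :: nat and \<theta> :: "nat \<Rightarrow> nat \<Rightarrow> real"
  assumes "m \<ge> 1" and "n \<ge> 1"
  shows "(\<Sum>i<m. \<Sum>j<n. (\<theta> i j - grid_mean m n \<theta>)^2)
           \<le> (5 + 4 * real m * real n / min ((real n)^2) ((real m)^2)) * (TV m n \<theta>)^2
         \<and> (m = n \<longrightarrow> (\<Sum>i<n. \<Sum>j<n. (\<theta> i j - grid_mean n n \<theta>)^2) \<le> 9 * (TV n n \<theta>)^2)"
proof -
  have "4 * real n * real n / min ((real n)^2) ((real n)^2) = 4"
    using assms(2) by (simp add: power2_eq_square)
  then show ?thesis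
    using grid_sum_sq_dev_mean_le_TV[OF assms] grid_sum_sq_dev_mean_le_TV[OF assms(2) assms(2)]
    by simp
qed

end
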